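(* Let $\vartheta=\vartheta_{B_3}^{\mathcal B,h}$ be a $3$-molecule. Then $\vartheta$ is ambiguous if and only if one of the following holds: (I) $|\mathcal B|=3$ and $h=1$ (i.e. $\vartheta$ is $K_4$); (II) $|\mathcal B|=2$ and $h=2$; (III) $|\mathcal B|=0$ and $h=3$ (i.e. $\vartheta$ is $K_{3,3}$).
   Context: Graphs are finite and undirected. The connectivity of a graph is the largest $k$ such that one must remove at least $k$ vertices to disconnect it (by convention $K_m$, $m\ge3$, has connectivity $m-1$). $k$-molecule: for $k,h\ge1$, $B_k=\{b_1,\dots,b_k\}$ and a set $\mathcal B$ of edges among vertices of $B_k$, $\vartheta_{B_k}^{\mathcal B,h}$ is the graph with vertex set $B_k\cup\{v_1,\dots,v_h\}$ and edge set $\mathcal B\cup\{v_ib_j:1\le i\le h,1\le j\le k\}$, where it is required that $h\ge k-k'$, $k'$ being the connectivity of the subgraph induced by $B_k$. For a graph $G$ and $B\subseteq V_G$ with $|B|=k$, $(G,B)$ is a $k$-premolecule if there is a $k$-molecule $\vartheta_{B_k}^{\mathcal B,h}$ and an isomorphism $G\to\vartheta_{B_k}^{\mathcal B,h}$ mapping $B$ onto $B_k$. An abstract $k$-molecule $G$ is non ambiguous if there is exactly one $B\subseteq V_G$ such that $(G,B)$ is a $k$-premolecule, and ambiguous otherwise; a $k$-molecule is (non) ambiguous if it is so as a graph. *)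

theory Defs
  imports Main
begin

definition simple_graph :: "'a set \<Rightarrow> 'a set set \<Rightarrow> bool" where
  "simple_graph V E \<longleftrightarrow> finite V \<and> (\<forall>e\<in>E. e \<subseteq> V \<and> card e = 2)"

definition graph_connected :: "'a set \<Rightarrow> 'a set set \<Rightarrow> bool" where
  "graph_connected V E \<longleftrightarrow>
     (\<forall>x\<in>V. \<forall>y\<in>V. (x, y) \<in> {(a, b). a \<in> V \<and> b \<in> V \<and> {a, b} \<in> E}\<^sup>*)"

text \<open>Vertex connectivity: least number of vertices whose removal leaves a
  disconnected graph or at most one vertex (so K_m has connectivity m-1).\<close>

definition connectivity :: "'a set \<Rightarrow> 'a set set \<Rightarrow> nat" where
  "connectivity V E = Min (card ` {S. S \<subseteq> V \<and>
      (card (V - S) \<le> 1 \<or> \<not> graph_connected (V - S) {e \<in> E. e \<subseteq> V - S})})"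

definition graph_iso :: "'a set \<Rightarrow> 'a set set \<Rightarrow> 'b set \<Rightarrow> 'b set set \<Rightarrow> ('a \<Rightarrow> 'b) \<Rightarrow> bool" where
  "graph_iso V E V' E' f \<longleftrightarrow> bij_betw f V V' \<and>
     (\<forall>x\<in>V. \<forall>y\<in>V. {x, y} \<in> E \<longleftrightarrow> {f x, f y} \<in> E')"

text \<open>The k-molecule: b_j is Inl j (1 \<le> j \<le> k), v_i is Inr i (1 \<le> i \<le> h);
  the edge set \<B> is given as a set of edges on the indices {1..k}.\<close>

definition mol_verts :: "nat \<Rightarrow> nat \<Rightarrow> (nat + nat) set" where
  "mol_verts k h = Inl ` {1..k} \<union> Inr ` {1..h}"

definition mol_edges :: "nat \<Rightarrow> nat set set \<Rightarrow> nat \<Rightarrow> (nat + nat) set set" where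
  "mol_edges k Bc h = (\<lambda>e. Inl ` e) ` Bc \<union>
      {{Inr i, Inl j} | i j. i \<in> {1..h} \<and> j \<in> {1..k}}"

definition is_molecule :: "nat \<Rightarrow> nat set set \<Rightarrow> nat \<Rightarrow> bool" where
  "is_molecule k Bc h \<longleftrightarrow> k \<ge> 1 \<and> h \<ge> 1 \<and>
     Bc \<subseteq> {{a, b} | a b. a \<in> {1..k} \<and> b \<in> {1..k} \<and> a \<noteq> b} \<and>
     h \<ge> k - connectivity {1..k} Bc"

definition premolecule :: "'a set \<Rightarrow> 'a set set \<Rightarrow> 'a set \<Rightarrow> nat \<Rightarrow> bool" where
  "premolecule V E B k \<longleftrightarrow> B \<subseteq> V \<and> card B = k \<and>
     (\<exists>Bc h f. is_molecule k Bc h \<and> graph_iso V E (mol_verts k h) (mol_edges k Bc h) f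
        \<and> f ` B = Inl ` {1..k})"

definition ambiguous :: "'a set \<Rightarrow> 'a set set \<Rightarrow> nat \<Rightarrow> bool" where
  "ambiguous V E k \<longleftrightarrow> \<not> (\<exists>!B. premolecule V E B k)"

end

theory Submission
  imports Defs
begin

text \<open>The canonical set \<open>B\<^sub>k\<close> always exhibits a molecule as a premolecule. If some
  other set B does, the h vertices outside B form an independent set (they are the images of
  the \<open>v\<^sub>i\<close>); as every \<open>b\<^sub>j\<close> is adjacent to every \<open>v\<^sub>i\<close>, they all
  lie in \<open>B\<^sub>k\<close>, so \<open>\<B>\<close> has an independent set of size h. Conversely, an independent
  \<open>U \<subseteq> B\<^sub>k\<close> of size h that is completely joined to \<open>B\<^sub>k - U\<close> can be
  swapped with the \<open>v\<^sub>i\<close> by an involutive automorphism, which moves \<open>B\<^sub>k\<close>.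
  For k = 3 the condition \<open>h \<ge> 3 - connectivity\<close> leaves exactly the triangle with h = 1,
  the path with h = 2 and the empty graph with h = 3 as the cases with such a U.\<close>

lemma Inl_Inl_in_mol_edges [simp]:
  "{Inl i, Inl j} \<in> mol_edges k Bc h \<longleftrightarrow> {i, j} \<in> Bc"
proof -
  have "{Inl i, Inl j} \<in> (\<lambda>e. Inl ` e) ` Bc \<longleftrightarrow> {i, j} \<in> Bc"
  proof
    assume "{Inl i, Inl j} \<in> (\<lambda>e. Inl ` e) ` Bc"
    then obtain e where e: "e \<in> Bc" "{Inl i, Inl j} = (Inl ` e :: (nat + nat) set)" by blast
    then have "Inl ` {i, j} = (Inl ` e :: (nat + nat) set)" by (simp only: image_insert image_empty)
    then have "{i, j} = e" by (simp only: inj_image_eq_iff[OF inj_Inl])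
    with e(1) show "{i, j} \<in> Bc" by simp
  next
    assume "{i, j} \<in> Bc"
    then show "{Inl i, Inl j} \<in> (\<lambda>e. Inl ` e) ` Bc" by (rule rev_image_eqI) simp
  qed
  moreover have "{Inl i, Inl j} \<notin> {{Inr a, Inl b} | a b. a \<in> {1..h} \<and> b \<in> {1..k}}"
    by (simp add: doubleton_eq_iff)
  ultimately show ?thesis unfolding mol_edges_def by blast
qed

lemma Inl_Inr_in_mol_edges [simp]:
  "{Inl i, Inr j} \<in> mol_edges k Bc h \<longleftrightarrow> i \<in> {1..k} \<and> j \<in> {1..h}"
  by (auto simp: mol_edges_def doubleton_eq_iff)

lemma Inr_Inl_in_mol_edges [simp]:
  "{Inr j, Inl i} \<in> mol_edges k Bc h \<longleftrightarrow> i \<in> {1..k} \<and> j \<in> {1..h}"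
  by (simp add: insert_commute)

lemma Inr_Inr_notin_mol_edges [simp]: "{Inr i, Inr j} \<notin> mol_edges k Bc h"
  by (auto simp: mol_edges_def doubleton_eq_iff)

lemma card_mol_verts: "card (mol_verts k h) = k + h"
  unfolding mol_verts_def by (subst card_Un_disjoint) (auto simp: card_image)

lemma finite_mol_verts [simp]: "finite (mol_verts k h)"
  by (simp add: mol_verts_def)

lemma mol_verts_minus_Inl: "mol_verts k h - Inl ` {1..k} = Inr ` {1..h}"
  by (auto simp: mol_verts_def)

lemma graph_iso_comp:
  assumes "graph_iso V E V E f" and "graph_iso V E V' E' g"
  shows "graph_iso V E V' E' (g \<circ> f)"
  using assms unfolding graph_iso_def
  by (auto simp: bij_betw_trans bij_betw_apply)

lemma premolecule_image_involution:
  assumes pm: "premolecule V E B k"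
    and aut: "\<forall>x\<in>V. \<forall>y\<in>V. {x, y} \<in> E \<longleftrightarrow> {f x, f y} \<in> E"
    and maps: "f ` V \<subseteq> V" and invol: "\<forall>x\<in>V. f (f x) = x"
  shows "premolecule V E (f ` B) k"
proof -
  obtain Bc h g where B: "B \<subseteq> V" "card B = k" and mol: "is_molecule k Bc h"
    and iso: "graph_iso V E (mol_verts k h) (mol_edges k Bc h) g"
    and gB: "g ` B = Inl ` {1..k}"
    using pm unfolding premolecule_def by blast
  have bij: "bij_betw f V V"
    by (rule bij_betw_byWitness[of V f f]) (use maps invol in auto)
  then have "graph_iso V E V E f" using aut unfolding graph_iso_def by blast
  then have "graph_iso V E (mol_verts k h) (mol_edges k Bc h) (g \<circ> f)"
    using iso by (rule graph_iso_comp)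
  moreover have "f ` f ` B = B"
    using B(1) invol by (force intro: rev_image_eqI)
  then have "(g \<circ> f) ` f ` B = Inl ` {1..k}"
    using gB by (metis image_comp)
  moreover have "card (f ` B) = k"
    using B bij by (metis bij_betw_def card_image inj_on_subset)
  ultimately show ?thesis
    using mol B(1) maps unfolding premolecule_def by blast
qed

lemma premolecule_base:
  assumes "is_molecule k Bc h"
  shows "premolecule (mol_verts k h) (mol_edges k Bc h) (Inl ` {1..k}) k"
  unfolding premolecule_def
proof (intro conjI exI)
  show "Inl ` {1..k} \<subseteq> mol_verts k h" by (auto simp: mol_verts_def)
  show "card (Inl ` {1..k} :: (nat + nat) set) = k" by (simp add: card_image)
  show "graph_iso (mol_verts k h) (mol_edges k Bc h) (mol_verts k h) (mol_edges k Bc h) id"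
    unfolding graph_iso_def by simp
qed (use assms in simp_all)

lemma ambiguous_molecule_iff:
  assumes "is_molecule k Bc h"
  shows "ambiguous (mol_verts k h) (mol_edges k Bc h) k \<longleftrightarrow>
    (\<exists>B. premolecule (mol_verts k h) (mol_edges k Bc h) B k \<and> B \<noteq> Inl ` {1..k})"
  using premolecule_base[OF assms] unfolding ambiguous_def by blast

lemma independent_set_of_other_premolecule:
  assumes pm: "premolecule (mol_verts k h) (mol_edges k Bc h) B k"
    and ne: "B \<noteq> Inl ` {1..k}"
  obtains U where "U \<subseteq> {1..k}" "card U = h" "\<forall>i\<in>U. \<forall>j\<in>U. {i, j} \<notin> Bc"
proof -
  let ?V = "mol_verts k h" and ?E = "mol_edges k Bc h"
  obtain Bc' h' f where BV: "B \<subseteq> ?V" and cB: "card B = k"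
    and iso: "graph_iso ?V ?E (mol_verts k h') (mol_edges k Bc' h') f"
    and fB: "f ` B = Inl ` {1..k}"
    using pm unfolding premolecule_def by blast
  have bij: "bij_betw f ?V (mol_verts k h')"
    and edge: "\<And>x y. x \<in> ?V \<Longrightarrow> y \<in> ?V \<Longrightarrow> {x, y} \<in> ?E \<longleftrightarrow> {f x, f y} \<in> mol_edges k Bc' h'"
    using iso unfolding graph_iso_def by auto
  define W where "W = ?V - B"
  have WV: "W \<subseteq> ?V" and cW: "card W = h"
    using BV cB card_mol_verts[of k h] by (auto simp: W_def card_Diff_subset finite_subset)
  have f_W: "\<exists>i. f x = Inr i" if "x \<in> W" for x
  proof -
    have "x \<in> ?V" "x \<notin> B" using that unfolding W_def by auto
    then have "f x \<in> mol_verts k h' - f ` B"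
      using BV bij inj_on_image_mem_iff[of f ?V x B] unfolding bij_betw_def by auto
    then show ?thesis unfolding fB mol_verts_minus_Inl by blast
  qed
  \<comment> \<open>f sends W onto the independent set of v's of the target molecule\<close>
  have W_indep: "{x, y} \<notin> ?E" if "x \<in> W" "y \<in> W" for x y
    using f_W[OF that(1)] f_W[OF that(2)] edge that WV by fastforce
  show ?thesis
  proof (cases "W \<subseteq> Inr ` {1..h}")
    case True
    then have "W = Inr ` {1..h}"
      using cW by (simp add: card_subset_eq card_image)
    then have "B = Inl ` {1..k}"
      using BV by (auto simp: W_def mol_verts_def)
    with ne show ?thesis by contradiction
  next
    case False
    then obtain x where "x \<in> W" "x \<notin> Inr ` {1..h}" by blast
    then obtain j where "Inl j \<in> W" using WV by (auto simp: mol_verts_def)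
    \<comment> \<open>a b in W is adjacent to every v, so W contains no v at all\<close>
    then have "x \<notin> Inr ` {1..h}" if "x \<in> W" for x
      using W_indep[OF \<open>Inl j \<in> W\<close> that] \<open>Inl j \<in> W\<close> WV by (auto simp: mol_verts_def)
    then have W_Inl: "W \<subseteq> Inl ` {1..k}"
      using WV unfolding mol_verts_def by blast
    define U where "U = {i. Inl i \<in> W}"
    have WU: "W = Inl ` U" using W_Inl by (auto simp: U_def)
    have "U \<subseteq> {1..k}" using W_Inl by (auto simp: U_def)
    moreover have "card U = h" using cW WU by (simp add: card_image)
    moreover have "\<forall>i\<in>U. \<forall>j\<in>U. {i, j} \<notin> Bc"
      using W_indep Inl_Inl_in_mol_edges unfolding U_def by blast
    ultimately show ?thesis by (rule that)
  qed
qed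

lemma ambiguous_if_swappable:
  assumes mol: "is_molecule k Bc h"
    and U: "U \<subseteq> {1..k}" "card U = h"
    and indep: "\<forall>i\<in>U. \<forall>j\<in>U. {i, j} \<notin> Bc"
    and joined: "\<forall>i\<in>U. \<forall>j\<in>{1..k} - U. {i, j} \<in> Bc"
  shows "ambiguous (mol_verts k h) (mol_edges k Bc h) k"
proof -
  let ?V = "mol_verts k h" and ?E = "mol_edges k Bc h"
  have "finite U" using U(1) finite_subset by blast
  then obtain \<sigma> where \<sigma>: "bij_betw \<sigma> U {1..h}"
    using finite_same_card_bij[of U "{1..h}"] U(2) by auto
  define \<tau> where "\<tau> = the_inv_into U \<sigma>"
  have \<sigma>_in: "\<sigma> i \<in> {1..h}" and \<tau>\<sigma>: "\<tau> (\<sigma> i) = i" if "i \<in> U" for i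
    using that \<sigma> by (auto simp: \<tau>_def bij_betw_def the_inv_into_f_f)
  have \<tau>_in: "\<tau> j \<in> U" and \<sigma>\<tau>: "\<sigma> (\<tau> j) = j" if "j \<in> {1..h}" for j
    using that \<sigma> by (auto simp: \<tau>_def bij_betw_def the_inv_into_into f_the_inv_into_f)
  have \<tau>_in': "\<tau> j \<in> {1..k}" if "j \<in> {1..h}" for j
    using \<tau>_in[OF that] U(1) by blast
  define f where "f = case_sum (\<lambda>i. if i \<in> U then Inr (\<sigma> i) else Inl i) (\<lambda>j. Inl (\<tau> j))"
  have f_simps: "f (Inl i) = (if i \<in> U then Inr (\<sigma> i) else Inl i)" "f (Inr j) = Inl (\<tau> j)"
    for i j by (simp_all add: f_def)
  have maps: "f ` ?V \<subseteq> ?V"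
    using U(1) \<sigma>_in \<tau>_in' by (auto simp: f_simps mol_verts_def)
  have invol: "\<forall>x\<in>?V. f (f x) = x"
    using \<tau>\<sigma> \<sigma>\<tau> \<sigma>_in \<tau>_in by (auto simp: f_simps mol_verts_def)
  have joined': "{j, i} \<in> Bc" if "i \<in> U" "j \<in> {1..k} - U" for i j
    using joined that by (simp add: insert_commute)
  have aut: "\<forall>x\<in>?V. \<forall>y\<in>?V. {x, y} \<in> ?E \<longleftrightarrow> {f x, f y} \<in> ?E"
  proof (intro ballI)
    fix x y assume "x \<in> ?V" "y \<in> ?V"
    then consider
        (bb) i j where "x = Inl i" "y = Inl j" "i \<in> {1..k}" "j \<in> {1..k}"
      | (bv) i j where "x = Inl i" "y = Inr j" "i \<in> {1..k}" "j \<in> {1..h}"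
      | (vb) i j where "x = Inr j" "y = Inl i" "i \<in> {1..k}" "j \<in> {1..h}"
      | (vv) i j where "x = Inr i" "y = Inr j" "i \<in> {1..h}" "j \<in> {1..h}"
      by (auto simp: mol_verts_def)
    then show "{x, y} \<in> ?E \<longleftrightarrow> {f x, f y} \<in> ?E"
    proof cases
      case bb
      then show ?thesis using \<sigma>_in indep joined joined'
        by (cases "i \<in> U"; cases "j \<in> U") (auto simp: f_simps)
    next
      case bv
      then show ?thesis using \<sigma>_in \<tau>_in \<tau>_in' joined'
        by (cases "i \<in> U") (auto simp: f_simps)
    next
      case vb
      then show ?thesis using \<sigma>_in \<tau>_in \<tau>_in' joined
        by (cases "i \<in> U") (auto simp: f_simps)
    next
      case vv
      then show ?thesis using \<tau>_in indep by (simp add: f_simps)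
    qed
  qed
  have "h \<ge> 1" using mol by (simp add: is_molecule_def)
  then have "U \<noteq> {}" using U(2) by (intro notI) simp
  then obtain i where "i \<in> U" by blast
  then have "Inr (\<sigma> i) \<in> f ` Inl ` {1..k}"
    using U(1) by (intro rev_image_eqI[of "Inl i"]) (auto simp: f_simps)
  then have moved: "f ` Inl ` {1..k} \<noteq> Inl ` {1..k}" by blast
  have "premolecule ?V ?E (f ` Inl ` {1..k}) k"
    using premolecule_base[OF mol] aut maps invol by (rule premolecule_image_involution)
  then show ?thesis
    using moved ambiguous_molecule_iff[OF mol] by blast
qed

lemma not_graph_connected_if_isolated:
  assumes "x \<in> V" "y \<in> V" "x \<noteq> y" and isolated: "\<forall>z\<in>V. {x, z} \<in> E \<longrightarrow> z = x"
  shows "\<not> graph_connected V E"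
proof
  let ?R = "{(a, b). a \<in> V \<and> b \<in> V \<and> {a, b} \<in> E}"
  have "z = x" if "(x, z) \<in> ?R\<^sup>*" for z
    using that by (induction rule: rtrancl_induct) (use isolated in auto)
  moreover assume "graph_connected V E"
  then have "(x, y) \<in> ?R\<^sup>*" using assms(1,2) unfolding graph_connected_def by blast
  ultimately show False using assms(3) by blast
qed

lemma connectivity_le_card:
  assumes "finite V" "S \<subseteq> V" "\<not> graph_connected (V - S) {e \<in> E. e \<subseteq> V - S}"
  shows "connectivity V E \<le> card S"
  unfolding connectivity_def
  by (rule Min_le) (use assms in \<open>auto intro: finite_subset[of _ "Pow V"]\<close>)

lemma connectivity_le_if_nonadjacent:
  assumes "finite V" "a \<in> V" "b \<in> V" "a \<noteq> b" "{a, b} \<notin> E"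
  shows "connectivity V E \<le> card V - 2"
proof -
  have "V - (V - {a, b}) = {a, b}" using assms by auto
  moreover have "\<not> graph_connected {a, b} {e \<in> E. e \<subseteq> {a, b}}"
    by (rule not_graph_connected_if_isolated) (use assms in auto)
  ultimately have "connectivity V E \<le> card (V - {a, b})"
    using assms(1) by (intro connectivity_le_card) auto
  then show ?thesis using assms by (simp add: card_Diff_subset)
qed

lemma connectivity_eq_0_if_isolated:
  assumes "finite V" "x \<in> V" "y \<in> V" "x \<noteq> y" "\<forall>z. {x, z} \<notin> E"
  shows "connectivity V E = 0"
proof -
  have "\<not> graph_connected (V - {}) {e \<in> E. e \<subseteq> V - {}}"
    by (rule not_graph_connected_if_isolated) (use assms in auto)
  then show ?thesis using connectivity_le_card[of V "{}"] assms(1) by simp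
qed

definition triangle_edges :: "nat set set" where
  "triangle_edges = {{1, 2}, {1, 3}, {2, 3}}"

lemma triangle_edges_eq_pairs:
  "triangle_edges = {{a, b} | a b. a \<in> {1..3} \<and> b \<in> {1..3} \<and> a \<noteq> b}"
proof
  show "triangle_edges \<subseteq> {{a, b} | a b. a \<in> {1..3} \<and> b \<in> {1..3} \<and> a \<noteq> b}"
    unfolding triangle_edges_def by force
  have "{1..3 :: nat} = {1, 2, 3}" by auto
  then show "{{a, b} | a b. a \<in> {1..3} \<and> b \<in> {1..3} \<and> a \<noteq> b} \<subseteq> triangle_edges"
    unfolding triangle_edges_def by (auto simp: insert_commute)
qed

lemma finite_triangle_edges [simp]: "finite triangle_edges"
  and card_triangle_edges: "card triangle_edges = 3"
  by (simp_all add: triangle_edges_def doubleton_eq_iff)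

lemma is_molecule_3_subset_triangle_edges: "is_molecule 3 Bc h \<Longrightarrow> Bc \<subseteq> triangle_edges"
  by (simp add: is_molecule_def triangle_edges_eq_pairs)

lemma pair_in_triangle_edges:
  "a \<in> {1..3} \<Longrightarrow> b \<in> {1..3} \<Longrightarrow> a \<noteq> b \<Longrightarrow> {a, b} \<in> triangle_edges"
  unfolding triangle_edges_eq_pairs by blast

lemma connectivity_triangle_le_1:
  assumes "Bc \<subseteq> triangle_edges" "card Bc \<le> 2"
  shows "connectivity {1..3} Bc \<le> 1"
proof -
  have "\<not> triangle_edges \<subseteq> Bc"
    using assms(2) card_mono[of Bc triangle_edges] card_triangle_edges finite_subset[OF assms(1)]
    by force
  then obtain a b where "a \<in> {1..3}" "b \<in> {1..3}" "a \<noteq> b" "{a, b} \<notin> Bc"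
    unfolding triangle_edges_eq_pairs by blast
  then show ?thesis using connectivity_le_if_nonadjacent[of "{1..3}" a b Bc] by simp
qed

lemma connectivity_triangle_eq_0:
  assumes Bc: "Bc \<subseteq> triangle_edges" "card Bc \<le> 1"
  shows "connectivity {1..3} Bc = 0"
proof -
  obtain e where e: "e \<in> triangle_edges" "Bc \<subseteq> {e}"
  proof (cases "Bc = {}")
    case True
    then show ?thesis using that[of "{1, 2}"] by (simp add: triangle_edges_def)
  next
    case False
    then have "card Bc \<noteq> 0" using finite_subset[OF Bc(1) finite_triangle_edges] by simp
    then have "card Bc = 1" using Bc(2) by linarith
    then obtain e where "Bc = {e}" by (rule card_1_singletonE)
    then show ?thesis using that Bc(1) by simp
  qed
  then obtain a b where ab: "e = {a, b}" "a \<in> {1..3}" "b \<in> {1..3}" "a \<noteq> b"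
    unfolding triangle_edges_eq_pairs by blast
  have "card {a, b} = 2" using ab(4) by simp
  then have "\<not> {1..3} \<subseteq> {a, b}"
    using card_mono[of "{a, b}" "{1..3 :: nat}"] by auto
  \<comment> \<open>the vertex outside the only possible edge e is isolated\<close>
  then obtain x where x: "x \<in> {1..3}" "x \<notin> {a, b}" by blast
  then have "\<forall>z. {x, z} \<notin> Bc" using e(2) ab(1) by (auto simp: doubleton_eq_iff)
  then show ?thesis
    using connectivity_eq_0_if_isolated[of "{1..3}" x a Bc] x ab(2) by auto
qed

lemma molecule_3_cases_of_independent_set:
  assumes mol: "is_molecule 3 Bc h"
    and U: "U \<subseteq> {1..3}" "card U = h"
    and indep: "\<forall>i\<in>U. \<forall>j\<in>U. {i, j} \<notin> Bc"
  shows "(card Bc = 3 \<and> h = 1) \<or> (card Bc = 2 \<and> h = 2) \<or> (card Bc = 0 \<and> h = 3)"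
proof -
  have Bc: "Bc \<subseteq> triangle_edges" using mol by (rule is_molecule_3_subset_triangle_edges)
  have fin: "finite Bc" "card Bc \<le> 3"
    using finite_subset[OF Bc finite_triangle_edges] card_mono[OF finite_triangle_edges Bc]
      card_triangle_edges
    by auto
  have h_ge: "h \<ge> 1" "h \<ge> 3 - connectivity {1..3} Bc"
    using mol unfolding is_molecule_def by auto
  have h_le: "h \<le> 3" using U card_mono[of "{1..3}" U] by simp
  have card_le_2: "card Bc \<le> 2" if h2: "h \<ge> 2"
  proof -
    have "\<not> card U \<le> Suc 0" using h2 U(2) by simp
    then obtain a b where "a \<in> U" "b \<in> U" "a \<noteq> b"
      using card_le_Suc0_iff_eq[OF finite_subset[OF U(1)]] by auto
    then have "{a, b} \<in> triangle_edges - Bc"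
      using U(1) indep pair_in_triangle_edges[of a b] by blast
    then have "card Bc < card triangle_edges"
      using Bc by (intro psubset_card_mono) auto
    then show ?thesis using card_triangle_edges by simp
  qed
  have empty: "Bc = {}" if "h = 3"
  proof -
    have "U = {1..3}" using that U by (intro card_subset_eq) auto
    then show ?thesis using Bc indep unfolding triangle_edges_eq_pairs by blast
  qed
  consider "card Bc = 3" | "card Bc = 2" | "card Bc \<le> 1" using fin by linarith
  then show ?thesis
  proof cases
    case 1
    then show ?thesis using card_le_2 h_ge by fastforce
  next
    case 2
    then have "h \<ge> 2" using connectivity_triangle_le_1[OF Bc] h_ge by fastforce
    then show ?thesis using 2 empty h_le by fastforce
  next
    case 3
    then have "h = 3" using connectivity_triangle_eq_0[OF Bc] h_ge h_le by simp
    then show ?thesis using empty by simp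
  qed
qed

lemma molecule_3_swappable_set:
  assumes Bc: "Bc \<subseteq> triangle_edges"
    and shape: "(card Bc = 3 \<and> h = 1) \<or> (card Bc = 2 \<and> h = 2) \<or> (card Bc = 0 \<and> h = 3)"
  obtains U where "U \<subseteq> {1..3}" "card U = h" "\<forall>i\<in>U. \<forall>j\<in>U. {i, j} \<notin> Bc"
    "\<forall>i\<in>U. \<forall>j\<in>{1..3} - U. {i, j} \<in> Bc"
proof -
  have no_loops: "{i} \<notin> Bc" for i :: nat
    using Bc by (auto simp: triangle_edges_def)
  consider "card Bc = 3" "h = 1" | "card Bc = 2" "h = 2" | "card Bc = 0" "h = 3"
    using shape by (elim disjE conjE) simp_all
  then show thesis
  proof cases
    case 1
    then have "Bc = triangle_edges" using Bc card_triangle_edges by (simp add: card_subset_eq)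
    then show thesis
      by (intro that[of "{3}"]) (use 1 no_loops in \<open>auto simp: triangle_edges_def insert_commute\<close>)
  next
    case 2
    then have "Bc \<noteq> triangle_edges" using card_triangle_edges by auto
    then obtain e where e: "e \<in> triangle_edges" "e \<notin> Bc" using Bc by blast
    then have "Bc \<subseteq> triangle_edges - {e}" "card (triangle_edges - {e}) = 2"
      using Bc card_triangle_edges by auto
    then have Bc_eq: "Bc = triangle_edges - {e}"
      using 2 by (intro card_subset_eq) auto
    obtain a b where ab: "e = {a, b}" "a \<in> {1..3}" "b \<in> {1..3}" "a \<noteq> b"
      using e(1) unfolding triangle_edges_eq_pairs by blast
    \<comment> \<open>the two ends of the missing edge are both joined to the third vertex\<close>
    have "\<forall>i\<in>{a, b}. \<forall>j\<in>{a, b}. {i, j} \<notin> Bc"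
      using e(2) ab(1) no_loops by (auto simp: insert_commute)
    moreover have "\<forall>i\<in>{a, b}. \<forall>j\<in>{1..3} - {a, b}. {i, j} \<in> Bc"
      using ab unfolding Bc_eq by (auto intro: pair_in_triangle_edges simp: doubleton_eq_iff)
    ultimately show thesis
      by (intro that[of "{a, b}"]) (use ab 2 in auto)
  next
    case 3
    then have "Bc = {}" using finite_subset[OF Bc finite_triangle_edges] by simp
    then show thesis by (intro that[of "{1..3}"]) (use 3 in auto)
  qed
qed

theorem mainTheorem6:
  fixes Bc :: "nat set set" and h :: nat
  assumes "is_molecule 3 Bc h"
  shows "ambiguous (mol_verts 3 h) (mol_edges 3 Bc h) 3 \<longleftrightarrow>
           (card Bc = 3 \<and> h = 1) \<or> (card Bc = 2 \<and> h = 2) \<or> (card Bc = 0 \<and> h = 3)"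
proof
  assume "ambiguous (mol_verts 3 h) (mol_edges 3 Bc h) 3"
  then obtain B where B: "premolecule (mol_verts 3 h) (mol_edges 3 Bc h) B 3" "B \<noteq> Inl ` {1..3}"
    using ambiguous_molecule_iff[OF assms] by blast
  then obtain U where "U \<subseteq> {1..3}" "card U = h" "\<forall>i\<in>U. \<forall>j\<in>U. {i, j} \<notin> Bc"
    by (rule independent_set_of_other_premolecule)
  then show "(card Bc = 3 \<and> h = 1) \<or> (card Bc = 2 \<and> h = 2) \<or> (card Bc = 0 \<and> h = 3)"
    by (rule molecule_3_cases_of_independent_set[OF assms])
next
  assume "(card Bc = 3 \<and> h = 1) \<or> (card Bc = 2 \<and> h = 2) \<or> (card Bc = 0 \<and> h = 3)"
  then obtain U where "U \<subseteq> {1..3}" "card U = h" "\<forall>i\<in>U. \<forall>j\<in>U. {i, j} \<notin> Bc"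
      "\<forall>i\<in>U. \<forall>j\<in>{1..3} - U. {i, j} \<in> Bc"
    by (rule molecule_3_swappable_set[OF is_molecule_3_subset_triangle_edges[OF assms]])
  then show "ambiguous (mol_verts 3 h) (mol_edges 3 Bc h) 3"
    by (rule ambiguous_if_swappable[OF assms])
qed

end
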